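(* Let $n,p\ge1$, $\mathbf{X}\in\mathbb{R}^{n\times p}$ fixed, $\beta^0\in\mathbb{R}^p$, $\mathbf{Y}=\mathbf{X}\beta^0+\varepsilon$ with $\varepsilon_i$ i.i.d. $\mathcal{N}(0,\sigma^2)$, $\sigma>0$. Let $\lambda>0$ with $\Omega_{\min}(\lambda)>0$, let $\hat\beta_{\mathrm{init}}$ be an estimator of $\beta^0$, let $\Delta_j>0$ be constants, and let $\mathcal{E}=\bigcap_{j=1}^p\{|a_{n,p;j}(\sigma)\sum_{k\neq j}(P_{\mathbf{X}})_{jk}(\hat\beta_{\mathrm{init};k}-\beta^0_k)|\le\Delta_j\}$. Let $\zeta\ge0$ and $P_{\mathrm{corr};j}=F_Z(P_j+\zeta)$. Then for every $0<\alpha<1$, $$\mathbb{P}[|V_\alpha|>0]\le F_Z\big(F_Z^{-1}(\alpha)-\zeta+2(2\pi)^{-1/2}\|a_{n,p}b(\lambda)\|_\infty\big)+\big(1-\mathbb{P}[\mathcal{E}]\big).$$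
   Context: $\hat\Sigma=n^{-1}\mathbf{X}^T\mathbf{X}$; $P_{\mathbf{X}}=\mathbf{X}^T(\mathbf{X}\mathbf{X}^T)^{-}\mathbf{X}$ (Moore–Penrose pseudo-inverse); $\theta^0=P_{\mathbf{X}}\beta^0$; $\Omega(\lambda)=(\hat\Sigma+\lambda I)^{-1}\hat\Sigma(\hat\Sigma+\lambda I)^{-1}$, $\Omega_{\min}(\lambda)=\min_j\Omega_{jj}(\lambda)$; $a_{n,p;j}(\sigma)=n^{1/2}\sigma^{-1}\Omega_{jj}(\lambda)^{-1/2}$. Ridge $\hat\beta=(\hat\Sigma+\lambda I)^{-1}n^{-1}\mathbf{X}^T\mathbf{Y}$; $b_j(\lambda)=\mathbb{E}[\hat\beta_j]-\theta^0_j$; $\|a_{n,p}b(\lambda)\|_\infty=\max_j a_{n,p;j}(\sigma)|b_j(\lambda)|$; $\hat\beta_{\mathrm{corr};j}=\hat\beta_j-\sum_{k\neq j}(P_{\mathbf{X}})_{jk}\hat\beta_{\mathrm{init};k}$. $P_j=2\big(1-\Phi\big((a_{n,p;j}(\sigma)|\hat\beta_{\mathrm{corr};j}|-\Delta_j)_+\big)\big)$, $\Phi$ the standard normal cdf. $F_Z(c)=\mathbb{P}[\min_{1\le j\le p}2(1-\Phi(a_{n,p;j}(\sigma)|Z_j|))\le c]$ with $(Z_1,\ldots,Z_p)\sim\mathcal{N}_p(0,n^{-1}\sigma^2\Omega(\lambda))$, and $F_Z^{-1}(\alpha)=\sup\{c:F_Z(c)\le\alpha\}$. $\hat S_\alpha=\{j:P_{\mathrm{corr};j}\le\alpha\}$,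 $S_0=\{j:\beta^0_j\neq0\}$, $V_\alpha=\hat S_\alpha\cap S_0^c$. *)

theory Defs
  imports "HOL-Probability.Probability"
begin

text \<open>Design matrix X :: real^'p^'n (n = CARD('n) rows, p = CARD('p) columns).\<close>

definition Sigma_hat :: "real^'p^'n \<Rightarrow> real^'p^'p" where
  "Sigma_hat X = (1 / real CARD('n)) *\<^sub>R (transpose X ** X)"

definition pinv :: "real^'m^'k \<Rightarrow> real^'k^'m" where
  "pinv A = (THE B. A ** B ** A = A \<and> B ** A ** B = B \<and>
                    transpose (A ** B) = A ** B \<and> transpose (B ** A) = B ** A)"

definition proj_X :: "real^'p^'n \<Rightarrow> real^'p^'p" where
  "proj_X X = transpose X ** pinv (X ** transpose X) ** X"

definition Omega :: "real^'p^'n \<Rightarrow> real \<Rightarrow> real^'p^'p" where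
  "Omega X lam =
     matrix_inv (Sigma_hat X + lam *\<^sub>R mat 1) ** Sigma_hat X ** matrix_inv (Sigma_hat X + lam *\<^sub>R mat 1)"

definition a_np :: "real^'p^'n \<Rightarrow> real \<Rightarrow> real \<Rightarrow> 'p \<Rightarrow> real" where
  "a_np X lam sg j = sqrt (real CARD('n)) / sg / sqrt (Omega X lam $ j $ j)"

definition ridge :: "real^'p^'n \<Rightarrow> real \<Rightarrow> real^'n \<Rightarrow> real^'p" where
  "ridge X lam Y = matrix_inv (Sigma_hat X + lam *\<^sub>R mat 1) *v ((1 / real CARD('n)) *\<^sub>R (transpose X *v Y))"

definition Phi :: "real \<Rightarrow> real" where
  "Phi x = measure (density lborel std_normal_density) {..x}"

definition gauss_law :: "real \<Rightarrow> real \<Rightarrow> real measure" where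
  "gauss_law m v = (if v = 0 then return borel m else density lborel (normal_density m (sqrt v)))"

text \<open>Z is a centred multivariate normal vector N_p(0, C) on N (Cramer--Wold definition).\<close>
definition centered_gaussian_vec :: "'b measure \<Rightarrow> ('b \<Rightarrow> real^'p) \<Rightarrow> real^'p^'p \<Rightarrow> bool" where
  "centered_gaussian_vec N Z C \<longleftrightarrow> Z \<in> borel_measurable N \<and>
     (\<forall>u. distr N borel (\<lambda>\<omega>. u \<bullet> Z \<omega>) = gauss_law 0 (u \<bullet> (C *v u)))"

text \<open>F_Z(c) computed from a vector Z ~ N_p(0, n^-1 sg^2 Omega(lambda)) on N.\<close>
definition FZ :: "'b measure \<Rightarrow> ('b \<Rightarrow> real^'p) \<Rightarrow> real^'p^'n \<Rightarrow> real \<Rightarrow> real \<Rightarrow> real \<Rightarrow> real" where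
  "FZ N Z X lam sg c =
     measure N {\<omega> \<in> space N. Min (range (\<lambda>j. 2 * (1 - Phi (a_np X lam sg j * \<bar>Z \<omega> $ j\<bar>)))) \<le> c}"

definition FZinv :: "(real \<Rightarrow> real) \<Rightarrow> real \<Rightarrow> real" where
  "FZinv F alpha = Sup {c. F c \<le> alpha}"

end

theory Submission
  imports Defs
begin

text \<open>
  The ridge estimator is linear in the response, so bhat = m + W with the deterministic
  m = ridge (X beta0) and the noise W = R eps, where R is the ridge matrix. Since
  R R^T = Omega / n, the noise W is a centred Gaussian vector with the covariance of Z, so
  W and Z have the same law (Cramer--Wold); in particular the bias is b = m - theta0.

  For j with beta0_j = 0 the corrected estimate equals W_j + b_j - S_j, where S_j is the
  weighted error of the initial estimator in the correction term. On the event E the shift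
  a_j S_j is absorbed by subtracting Delta_j, and a_j b_j moves the p-value of W_j by at most
  2 (2 pi)^(-1/2) ||a b||_inf because Phi is (2 pi)^(-1/2)-Lipschitz. If j is selected,
  F_Z(P_j + zeta) <= alpha forces P_j + zeta <= F_Z^-1(alpha). Hence on E a false selection
  implies that the minimal p-value of W is at most the threshold of the bound, an event of
  probability F_Z at that threshold.

  The Cramer--Wold device is proved directly: trigonometric polynomials have equal expectations
  under two laws with equal one-dimensional projections; after the coordinatewise map
  z \<mapsto> sin (z / r) into a compact cube, Stone--Weierstrass extends this to continuous functions
  and hence to boxes, up to the probability of leaving the cube [-r, r]^p.
\<close>

section \<open>The Cramer--Wold device\<close>

inductive_set trig_poly :: "(real^'p \<Rightarrow> complex) set" where
  cis: "(\<lambda>z. cis (u \<bullet> z)) \<in> trig_poly"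
| add: "f \<in> trig_poly \<Longrightarrow> g \<in> trig_poly \<Longrightarrow> (\<lambda>z. f z + g z) \<in> trig_poly"
| scale: "f \<in> trig_poly \<Longrightarrow> (\<lambda>z. c * f z) \<in> trig_poly"

lemma trig_poly_const: "(\<lambda>z. c) \<in> trig_poly"
  using trig_poly.scale[OF trig_poly.cis[of 0], of c] by simp

lemma trig_poly_cis_mult: "g \<in> trig_poly \<Longrightarrow> (\<lambda>z. cis (u \<bullet> z) * g z) \<in> trig_poly"
proof (induction g rule: trig_poly.induct)
  case (cis v)
  have "(\<lambda>z. cis ((u + v) \<bullet> z)) \<in> trig_poly" by (rule trig_poly.cis)
  then show ?case by (simp add: inner_add_left cis_mult)
next
  case (add f g)
  then show ?case using trig_poly.add[OF add.IH] by (simp add: distrib_left)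
next
  case (scale f c)
  then show ?case using trig_poly.scale[OF scale.IH, of c] by (simp add: ac_simps)
qed

lemma trig_poly_mult: "f \<in> trig_poly \<Longrightarrow> g \<in> trig_poly \<Longrightarrow> (\<lambda>z. f z * g z) \<in> trig_poly"
proof (induction f rule: trig_poly.induct)
  case (cis u)
  then show ?case by (rule trig_poly_cis_mult)
next
  case (add f h)
  then show ?case using trig_poly.add[OF add.IH] by (simp add: distrib_right)
next
  case (scale f c)
  then show ?case using trig_poly.scale[OF scale.IH, of c] by (simp add: ac_simps)
qed

lemma trig_poly_sum:
  "finite I \<Longrightarrow> (\<And>i. i \<in> I \<Longrightarrow> f i \<in> trig_poly) \<Longrightarrow> (\<lambda>z. \<Sum>i\<in>I. f i z) \<in> trig_poly"
  by (induction I rule: finite_induct) (auto intro: trig_poly.add trig_poly_const)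

lemma trig_poly_bounded: "f \<in> trig_poly \<Longrightarrow> \<exists>B. \<forall>z. norm (f z) \<le> B"
proof (induction f rule: trig_poly.induct)
  case (cis u)
  then show ?case by (auto intro!: exI[of _ 1])
next
  case (add f g)
  then obtain B1 B2 where "\<forall>z. norm (f z) \<le> B1" "\<forall>z. norm (g z) \<le> B2" by auto
  then show ?case by (auto intro!: exI[of _ "B1 + B2"] intro: norm_triangle_le add_mono)
next
  case (scale f c)
  then obtain B where "\<forall>z. norm (f z) \<le> B" by auto
  then show ?case
    by (intro exI[of _ "norm c * B"]) (auto simp: norm_mult intro: mult_left_mono)
qed

lemma continuous_on_trig_poly: "f \<in> trig_poly \<Longrightarrow> continuous_on UNIV f"
  by (induction f rule: trig_poly.induct) (auto intro!: continuous_intros)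

definition sin_coords :: "real \<Rightarrow> real^'p \<Rightarrow> real^'p" where
  "sin_coords c z = (\<chi> j. sin (c * z $ j))"

lemma sin_coords_in_cube: "sin_coords c z \<in> cbox (- 1) (1::real^'p)"
  by (auto simp: mem_box_cart sin_coords_def abs_le_iff[symmetric])

lemma continuous_on_sin_coords: "continuous_on UNIV (sin_coords c :: real^'p \<Rightarrow> _)"
  unfolding sin_coords_def by (intro continuous_intros)

lemma trig_poly_sin_coord: "(\<lambda>z. complex_of_real (sin (c * (z::real^'p) $ j))) \<in> trig_poly"
proof -
  have sin_cis: "complex_of_real (sin t) = (1 / (2 * \<i>)) * cis t + (-1 / (2 * \<i>)) * cis (- t)" for t
    by (simp add: complex_eq_iff)
  have "complex_of_real (sin (c * z $ j)) =
      (1 / (2 * \<i>)) * cis ((c *\<^sub>R axis j 1) \<bullet> z) + (-1 / (2 * \<i>)) * cis ((- (c *\<^sub>R axis j 1)) \<bullet> z)"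
    for z :: "real^'p"
    by (simp add: sin_cis inner_axis')
  then show ?thesis by (simp only:) (intro trig_poly.add trig_poly.scale trig_poly.cis)
qed

lemma trig_poly_polynomial_sin_coords:
  assumes "real_polynomial_function (Q :: real^'p \<Rightarrow> real)"
  shows "(\<lambda>z. complex_of_real (Q (sin_coords c z))) \<in> trig_poly"
  using assms
proof (induction Q rule: real_polynomial_function.induct)
  case (linear f)
  then interpret bounded_linear f .
  have expand: "f s = (\<Sum>j\<in>UNIV. s $ j * f (axis j 1))" for s :: "real^'p"
  proof -
    have "f s = f (\<Sum>j\<in>UNIV. s $ j *\<^sub>R axis j 1)"
      using basis_expansion[of s] by (simp add: scalar_mult_eq_scaleR)
    then show ?thesis by (simp add: sum scale)
  qed
  have "(\<lambda>z. complex_of_real (f (sin_coords c z))) =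
      (\<lambda>z. \<Sum>j\<in>UNIV. complex_of_real (f (axis j 1)) * complex_of_real (sin (c * z $ j)))"
    by (subst expand) (simp add: sin_coords_def mult.commute)
  also have "\<dots> \<in> trig_poly"
    by (intro trig_poly_sum trig_poly.scale trig_poly_sin_coord) auto
  finally show ?case .
next
  case (const c)
  then show ?case by (rule trig_poly_const)
next
  case (add f g)
  then show ?case using trig_poly.add[OF add.IH] by simp
next
  case (mult f g)
  then show ?case using trig_poly_mult[OF mult.IH] by simp
qed

lemma (in prob_space) integrable_bounded_continuous_comp:
  fixes f :: "'c::euclidean_space \<Rightarrow> 'd::{banach, second_countable_topology}"
  assumes "continuous_on UNIV f" "\<And>z. norm (f z) \<le> B" "V \<in> borel_measurable M"
  shows "integrable M (\<lambda>\<omega>. f (V \<omega>))"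
  by (rule integrable_const_bound[where B = B])
    (use assms in \<open>auto intro: measurable_compose borel_measurable_continuous_onI\<close>)

lemma (in prob_space) integrable_trig_poly:
  assumes "V \<in> borel_measurable M" "f \<in> trig_poly"
  shows "integrable M (\<lambda>\<omega>. f (V \<omega>))"
proof -
  obtain B where "\<forall>z. norm (f z) \<le> B" using trig_poly_bounded[OF assms(2)] by blast
  then show ?thesis
    using integrable_bounded_continuous_comp[OF continuous_on_trig_poly[OF assms(2)]] assms(1)
    by blast
qed

lemma integral_trig_poly_eq:
  fixes V :: "'a \<Rightarrow> real^'p" and V' :: "'b \<Rightarrow> real^'p"
  assumes M: "prob_space M" and N: "prob_space N"
    and V: "V \<in> borel_measurable M" and V': "V' \<in> borel_measurable N"
    and eq: "\<And>u. distr M borel (\<lambda>\<omega>. u \<bullet> V \<omega>) = distr N borel (\<lambda>\<omega>. u \<bullet> V' \<omega>)"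
    and "f \<in> trig_poly"
  shows "(\<integral>\<omega>. f (V \<omega>) \<partial>M) = (\<integral>\<omega>. f (V' \<omega>) \<partial>N)"
  using \<open>f \<in> trig_poly\<close>
proof (induction f rule: trig_poly.induct)
  case (cis u)
  have cis_m: "(\<lambda>x. cis x) \<in> borel_measurable borel"
    by (intro borel_measurable_continuous_onI continuous_intros)
  have "(\<integral>\<omega>. cis (u \<bullet> V \<omega>) \<partial>M) = (\<integral>x. cis x \<partial>distr M borel (\<lambda>\<omega>. u \<bullet> V \<omega>))"
    using V by (intro integral_distr[symmetric] cis_m) measurable
  also have "\<dots> = (\<integral>x. cis x \<partial>distr N borel (\<lambda>\<omega>. u \<bullet> V' \<omega>))"
    by (simp add: eq)
  also have "\<dots> = (\<integral>\<omega>. cis (u \<bullet> V' \<omega>) \<partial>N)"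
    using V' by (intro integral_distr cis_m) measurable
  finally show ?case .
next
  case (add f g)
  with M N V V' show ?case
    by (simp add: Bochner_Integration.integral_add prob_space.integrable_trig_poly)
next
  case (scale f c)
  then show ?case by simp
qed

lemma (in prob_space) abs_integral_diff_le:
  fixes f g :: "'a \<Rightarrow> real"
  assumes "integrable M f" "integrable M g" "\<And>x. x \<in> space M \<Longrightarrow> \<bar>f x - g x\<bar> \<le> e"
  shows "\<bar>(\<integral>x. f x \<partial>M) - (\<integral>x. g x \<partial>M)\<bar> \<le> e"
proof -
  have "\<bar>(\<integral>x. f x \<partial>M) - (\<integral>x. g x \<partial>M)\<bar> = \<bar>\<integral>x. f x - g x \<partial>M\<bar>"
    using assms by simp
  also have "\<dots> \<le> (\<integral>x. \<bar>f x - g x\<bar> \<partial>M)"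
    using integral_norm_bound[of M "\<lambda>x. f x - g x"] by simp
  also have "\<dots> \<le> (\<integral>x. e \<partial>M)"
    by (rule integral_mono) (use assms in auto)
  also have "\<dots> = e" by (simp add: prob_space)
  finally show ?thesis .
qed

lemma integral_polynomial_sin_coords_eq:
  fixes V :: "'a \<Rightarrow> real^'p" and V' :: "'b \<Rightarrow> real^'p"
  assumes "prob_space M" "prob_space N" "V \<in> borel_measurable M" "V' \<in> borel_measurable N"
    and "\<And>u. distr M borel (\<lambda>\<omega>. u \<bullet> V \<omega>) = distr N borel (\<lambda>\<omega>. u \<bullet> V' \<omega>)"
    and "real_polynomial_function Q"
  shows "(\<integral>\<omega>. Q (sin_coords c (V \<omega>)) \<partial>M) = (\<integral>\<omega>. Q (sin_coords c (V' \<omega>)) \<partial>N)"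
proof -
  have "complex_of_real (\<integral>\<omega>. Q (sin_coords c (V \<omega>)) \<partial>M)
      = (\<integral>\<omega>. complex_of_real (Q (sin_coords c (V \<omega>))) \<partial>M)"
    by simp
  also have "\<dots> = (\<integral>\<omega>. complex_of_real (Q (sin_coords c (V' \<omega>))) \<partial>N)"
    using integral_trig_poly_eq[OF assms(1-5) trig_poly_polynomial_sin_coords[OF assms(6)]] by simp
  also have "\<dots> = complex_of_real (\<integral>\<omega>. Q (sin_coords c (V' \<omega>)) \<partial>N)"
    by simp
  finally show ?thesis by simp
qed

text \<open>As sin_coords c takes values in the cube [-1, 1]^p, Stone--Weierstrass approximates H
  there uniformly by polynomials, which the previous lemma handles.\<close>

lemma integral_continuous_sin_coords_eq:
  fixes V :: "'a \<Rightarrow> real^'p" and V' :: "'b \<Rightarrow> real^'p" and H :: "real^'p \<Rightarrow> real"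
  assumes M: "prob_space M" and N: "prob_space N"
    and V: "V \<in> borel_measurable M" and V': "V' \<in> borel_measurable N"
    and eq: "\<And>u. distr M borel (\<lambda>\<omega>. u \<bullet> V \<omega>) = distr N borel (\<lambda>\<omega>. u \<bullet> V' \<omega>)"
    and H: "continuous_on UNIV H" "\<And>s. \<bar>H s\<bar> \<le> 1"
  shows "(\<integral>\<omega>. H (sin_coords c (V \<omega>)) \<partial>M) = (\<integral>\<omega>. H (sin_coords c (V' \<omega>)) \<partial>N)"
proof -
  interpret M: prob_space M by fact
  interpret N: prob_space N by fact
  let ?HM = "\<integral>\<omega>. H (sin_coords c (V \<omega>)) \<partial>M" and ?HN = "\<integral>\<omega>. H (sin_coords c (V' \<omega>)) \<partial>N"
  have H_sin: "continuous_on UNIV (\<lambda>z. H (sin_coords c z))"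
    using H(1) continuous_on_sin_coords by (rule continuous_on_compose2) auto
  have approx: "\<bar>?HM - ?HN\<bar> \<le> 2 * e" if "e > 0" for e
  proof -
    obtain Q where Q: "real_polynomial_function Q"
      and QH: "\<And>s. s \<in> cbox (- 1) (1::real^'p) \<Longrightarrow> \<bar>H s - Q s\<bar> < e"
      using Stone_Weierstrass_real_polynomial_function[of "cbox (- 1) 1" H e] H(1) \<open>e > 0\<close>
      by (auto intro: continuous_on_subset)
    have Q_sin: "continuous_on UNIV (\<lambda>z. Q (sin_coords c z))"
      using continuous_on_polymonial_function[OF Q[unfolded real_polynomial_function_eq]]
        continuous_on_sin_coords
      by (rule continuous_on_compose2) auto
    have QH_sin: "\<bar>H (sin_coords c z) - Q (sin_coords c z)\<bar> \<le> e" for z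
      using QH[OF sin_coords_in_cube] by (simp add: less_imp_le)
    have Q_bound: "norm (Q (sin_coords c z)) \<le> 1 + e" for z
      using QH_sin[of z] H(2)[of "sin_coords c z"] by simp
    have "\<bar>?HM - (\<integral>\<omega>. Q (sin_coords c (V \<omega>)) \<partial>M)\<bar> \<le> e"
      using H_sin H(2) Q_sin Q_bound V QH_sin
      by (intro M.abs_integral_diff_le M.integrable_bounded_continuous_comp) auto
    moreover have "\<bar>?HN - (\<integral>\<omega>. Q (sin_coords c (V' \<omega>)) \<partial>N)\<bar> \<le> e"
      using H_sin H(2) Q_sin Q_bound V' QH_sin
      by (intro N.abs_integral_diff_le N.integrable_bounded_continuous_comp) auto
    ultimately show ?thesis
      using integral_polynomial_sin_coords_eq[OF M N V V' eq Q, of c] by linarith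
  qed
  have "\<bar>?HM - ?HN\<bar> \<le> 0"
    by (rule field_le_epsilon) (use approx[of "_ / 2"] in simp)
  then show ?thesis by simp
qed

definition box_cutoff :: "real^'p \<Rightarrow> real^'p \<Rightarrow> nat \<Rightarrow> real^'p \<Rightarrow> real" where
  "box_cutoff a b k s = (\<Prod>j\<in>UNIV. min 1 (real k * max 0 (min (s $ j - a $ j) (b $ j - s $ j))))"

lemma box_cutoff_tendsto_indicator: "(\<lambda>k. box_cutoff a b k s) \<longlonglongrightarrow> indicator (box a b) s"
proof (cases "s \<in> box a b")
  case True
  have min_tendsto: "(\<lambda>k. min 1 (real k * d)) \<longlonglongrightarrow> 1" if "d > 0" for d :: real
  proof (rule tendsto_eventually)
    obtain K :: nat where K: "1 / d \<le> real K" using real_arch_simple by blast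
    have "1 \<le> real k * d" if "K \<le> k" for k
    proof -
      have "1 \<le> real K * d" using K \<open>d > 0\<close> by (simp add: field_simps)
      also have "\<dots> \<le> real k * d" using that \<open>d > 0\<close> by (simp add: mult_right_mono)
      finally show ?thesis .
    qed
    then show "\<forall>\<^sub>F k in sequentially. min 1 (real k * d) = 1"
      unfolding eventually_sequentially by (intro exI[of _ K]) auto
  qed
  have coord: "(\<lambda>k. min 1 (real k * max 0 (min (s $ j - a $ j) (b $ j - s $ j)))) \<longlonglongrightarrow> 1" for j
    using True by (intro min_tendsto) (auto simp: mem_box_cart)
  have "(\<lambda>k. box_cutoff a b k s) \<longlonglongrightarrow> 1"
    unfolding box_cutoff_def using tendsto_prod[where S = UNIV, OF coord] by simp
  with True show ?thesis by simp
next
  case False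
  then obtain j where "\<not> (a $ j < s $ j \<and> s $ j < b $ j)"
    by (auto simp: mem_box_cart)
  then have "max 0 (min (s $ j - a $ j) (b $ j - s $ j)) = 0"
    by auto
  then have "box_cutoff a b k s = 0" for k
    unfolding box_cutoff_def by (intro prod_zero finite_UNIV bexI[of _ j]) auto
  with False show ?thesis by simp
qed

lemma continuous_on_box_cutoff: "continuous_on UNIV (box_cutoff a b k)"
  unfolding box_cutoff_def by (intro continuous_intros)

lemma abs_box_cutoff_le_1: "\<bar>box_cutoff a b k s\<bar> \<le> 1"
proof -
  have "0 \<le> box_cutoff a b k s" "box_cutoff a b k s \<le> 1"
    unfolding box_cutoff_def by (intro prod_nonneg prod_le_1; simp)+
  then show ?thesis by simp
qed

lemma (in prob_space) integral_box_cutoff_tendsto: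
  assumes "W \<in> borel_measurable M"
  shows "(\<lambda>k. \<integral>\<omega>. box_cutoff a b k (W \<omega>) \<partial>M) \<longlonglongrightarrow> prob {\<omega>\<in>space M. W \<omega> \<in> box a b}"
proof -
  have "(\<lambda>k. \<integral>\<omega>. box_cutoff a b k (W \<omega>) \<partial>M) \<longlonglongrightarrow> (\<integral>\<omega>. indicator (box a b) (W \<omega>) \<partial>M)"
  proof (rule integral_dominated_convergence[where w = "\<lambda>_. 1"])
    show "(\<lambda>\<omega>. box_cutoff a b k (W \<omega>)) \<in> borel_measurable M" for k
      using assms borel_measurable_continuous_onI[OF continuous_on_box_cutoff]
      by (rule measurable_compose)
  qed (use assms box_cutoff_tendsto_indicator abs_box_cutoff_le_1 in \<open>auto intro!: AE_I2\<close>)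
  also have "(\<integral>\<omega>. indicator (box a b) (W \<omega>) \<partial>M)
      = (\<integral>\<omega>. indicator {\<omega>\<in>space M. W \<omega> \<in> box a b} \<omega> \<partial>M)"
    by (intro Bochner_Integration.integral_cong) (auto simp: indicator_def)
  also have "\<dots> = prob {\<omega>\<in>space M. W \<omega> \<in> box a b}"
    by (simp add: Int_absorb2 subset_eq)
  finally show ?thesis .
qed

lemma prob_sin_coords_in_box_eq:
  fixes V :: "'a \<Rightarrow> real^'p" and V' :: "'b \<Rightarrow> real^'p"
  assumes M: "prob_space M" and N: "prob_space N"
    and V: "V \<in> borel_measurable M" and V': "V' \<in> borel_measurable N"
    and eq: "\<And>u. distr M borel (\<lambda>\<omega>. u \<bullet> V \<omega>) = distr N borel (\<lambda>\<omega>. u \<bullet> V' \<omega>)"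
  shows "measure M {\<omega>\<in>space M. sin_coords c (V \<omega>) \<in> box a b}
       = measure N {\<omega>\<in>space N. sin_coords c (V' \<omega>) \<in> box a b}"
proof -
  have sin_m: "sin_coords c \<in> borel_measurable borel"
    by (rule borel_measurable_continuous_onI[OF continuous_on_sin_coords])
  have "(\<lambda>k. \<integral>\<omega>. box_cutoff a b k (sin_coords c (V' \<omega>)) \<partial>N)
      \<longlonglongrightarrow> measure M {\<omega>\<in>space M. sin_coords c (V \<omega>) \<in> box a b}"
    using prob_space.integral_box_cutoff_tendsto[OF M measurable_compose[OF V sin_m]]
      integral_continuous_sin_coords_eq[OF M N V V' eq continuous_on_box_cutoff abs_box_cutoff_le_1]
    by simp
  moreover have "(\<lambda>k. \<integral>\<omega>. box_cutoff a b k (sin_coords c (V' \<omega>)) \<partial>N)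
      \<longlonglongrightarrow> measure N {\<omega>\<in>space N. sin_coords c (V' \<omega>) \<in> box a b}"
    by (rule prob_space.integral_box_cutoff_tendsto[OF N measurable_compose[OF V' sin_m]])
  ultimately show ?thesis by (rule LIMSEQ_unique)
qed

lemma abs_measure_diff_le:
  assumes "finite_measure L" "A \<in> sets L" "A' \<in> sets L" "D \<in> sets L"
    and "A \<subseteq> A' \<union> D" "A' \<subseteq> A \<union> D"
  shows "\<bar>measure L A - measure L A'\<bar> \<le> measure L D"
proof -
  interpret finite_measure L by fact
  have "measure L A \<le> measure L (A' \<union> D)" using assms by (intro finite_measure_mono) auto
  also have "\<dots> \<le> measure L A' + measure L D" using assms by (intro measure_Un_le) auto
  moreover have "measure L A' \<le> measure L (A \<union> D)" using assms by (intro finite_measure_mono) auto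
  moreover have "\<dots> \<le> measure L A + measure L D" using assms by (intro measure_Un_le) auto
  ultimately show ?thesis by linarith
qed

lemma mem_cube_iff: "z \<in> cbox (- vec r) (vec r) \<longleftrightarrow> (\<forall>j. \<bar>z $ j\<bar> \<le> r)"
  for z :: "real^'p"
  by (auto simp: mem_box_cart abs_le_iff minus_le_iff)

lemma cube_mono: "r \<le> s \<Longrightarrow> cbox (- vec r) (vec r) \<subseteq> cbox (- vec s) (vec s :: real^'p)"
  by (auto simp: mem_cube_iff[of _ s]) (meson mem_cube_iff order_trans)

lemma (in prob_space) prob_outside_cube_tendsto_0:
  fixes V :: "'a \<Rightarrow> real^'p"
  assumes V: "V \<in> borel_measurable M"
  shows "(\<lambda>k. prob {\<omega>\<in>space M. V \<omega> \<notin> cbox (- vec (real k)) (vec (real k))}) \<longlonglongrightarrow> 0"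
proof -
  let ?A = "\<lambda>k. {\<omega>\<in>space M. V \<omega> \<notin> cbox (- vec (real k)) (vec (real k))}"
  have "?A k \<in> events" for k
    using V by measurable
  moreover have "decseq ?A"
    using cube_mono[of "real k" "real (Suc k)" for k] by (intro decseq_SucI) auto
  moreover have "(\<Inter>k. ?A k) = {}"
  proof (rule ccontr)
    assume "(\<Inter>k. ?A k) \<noteq> {}"
    then obtain \<omega> where outside: "\<And>k. V \<omega> \<notin> cbox (- vec (real k)) (vec (real k))" by auto
    obtain k :: nat where "norm (V \<omega>) \<le> real k" using real_arch_simple by blast
    then have "V \<omega> \<in> cbox (- vec (real k)) (vec (real k))"
      unfolding mem_cube_iff using component_le_norm_cart order_trans by blast
    with outside show False by blast
  qed
  ultimately show ?thesis
    using Lim_measure_decseq[of ?A M] by auto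
qed

lemma sin_divide_less_iff:
  fixes r x y :: real
  assumes "r > 0" "\<bar>x\<bar> \<le> r" "\<bar>y\<bar> \<le> r"
  shows "sin (x / r) < sin (y / r) \<longleftrightarrow> x < y"
proof -
  have half_pi: "- (pi / 2) \<le> t / r \<and> t / r \<le> pi / 2" if "\<bar>t\<bar> \<le> r" for t
  proof -
    have "\<bar>t / r\<bar> \<le> 1" using that \<open>r > 0\<close> by (simp add: abs_divide)
    then show ?thesis using pi_ge_two unfolding abs_le_iff by linarith
  qed
  have "sin (x / r) < sin (y / r) \<longleftrightarrow> x / r < y / r"
    using half_pi[OF assms(2)] half_pi[OF assms(3)] by (intro sin_mono_less_eq) auto
  with \<open>r > 0\<close> show ?thesis by (simp add: divide_less_cancel)
qed

lemma sin_coords_in_box_iff: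
  fixes a b z :: "real^'p"
  assumes "r > 0" and "a \<in> cbox (- vec r) (vec r)" "b \<in> cbox (- vec r) (vec r)"
    "z \<in> cbox (- vec r) (vec r)"
  shows "sin_coords (1 / r) z \<in> box (sin_coords (1 / r) a) (sin_coords (1 / r) b) \<longleftrightarrow> z \<in> box a b"
proof -
  have "\<bar>a $ j\<bar> \<le> r" "\<bar>b $ j\<bar> \<le> r" "\<bar>z $ j\<bar> \<le> r" for j
    using assms(2-4) by (auto simp: mem_cube_iff)
  then show ?thesis
    by (simp add: mem_box_cart sin_coords_def sin_divide_less_iff[OF \<open>r > 0\<close>])
qed

text \<open>As x \<mapsto> sin (x / r) is strictly increasing on [-r, r], the two events differ only
  where V leaves the cube [-r, r]^p.\<close>

lemma (in prob_space) abs_prob_in_box_diff_le: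
  fixes V :: "'a \<Rightarrow> real^'p"
  assumes V: "V \<in> borel_measurable M" and "r > 0"
    and ab: "a \<in> cbox (- vec r) (vec r)" "b \<in> cbox (- vec r) (vec r)"
  shows "\<bar>prob {\<omega>\<in>space M. V \<omega> \<in> box a b}
        - prob {\<omega>\<in>space M. sin_coords (1 / r) (V \<omega>) \<in> box (sin_coords (1 / r) a) (sin_coords (1 / r) b)}\<bar>
    \<le> prob {\<omega>\<in>space M. V \<omega> \<notin> cbox (- vec r) (vec r)}"
proof (rule abs_measure_diff_le)
  have "sin_coords (1 / r) \<in> borel_measurable borel"
    by (rule borel_measurable_continuous_onI[OF continuous_on_sin_coords])
  with V show "{\<omega>\<in>space M. sin_coords (1 / r) (V \<omega>) \<in> box (sin_coords (1 / r) a) (sin_coords (1 / r) b)} \<in> events"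
    by measurable
qed (use V sin_coords_in_box_iff[OF \<open>r > 0\<close> ab] in auto)

lemma prob_in_box_eq:
  fixes V :: "'a \<Rightarrow> real^'p" and V' :: "'b \<Rightarrow> real^'p"
  assumes M: "prob_space M" and N: "prob_space N"
    and V: "V \<in> borel_measurable M" and V': "V' \<in> borel_measurable N"
    and eq: "\<And>u. distr M borel (\<lambda>\<omega>. u \<bullet> V \<omega>) = distr N borel (\<lambda>\<omega>. u \<bullet> V' \<omega>)"
  shows "measure M {\<omega>\<in>space M. V \<omega> \<in> box a b} = measure N {\<omega>\<in>space N. V' \<omega> \<in> box a b}"
proof -
  obtain K :: nat where K: "norm a + norm b + 1 \<le> real K" using real_arch_simple by blast
  let ?tail = "\<lambda>k. measure M {\<omega>\<in>space M. V \<omega> \<notin> cbox (- vec (real k)) (vec (real k))}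
      + measure N {\<omega>\<in>space N. V' \<omega> \<notin> cbox (- vec (real k)) (vec (real k))}"
  have "\<bar>measure M {\<omega>\<in>space M. V \<omega> \<in> box a b} - measure N {\<omega>\<in>space N. V' \<omega> \<in> box a b}\<bar> \<le> ?tail k"
    if "K \<le> k" for k
  proof -
    have r: "real k > 0" and "norm a \<le> real k" "norm b \<le> real k"
      using K \<open>K \<le> k\<close> norm_ge_zero[of a] norm_ge_zero[of b] of_nat_le_iff[of K k, where 'a = real]
      by linarith+
    then have ab: "a \<in> cbox (- vec (real k)) (vec (real k))" "b \<in> cbox (- vec (real k)) (vec (real k))"
      by (auto simp: mem_cube_iff intro: order_trans[OF component_le_norm_cart])
    show ?thesis
      using prob_space.abs_prob_in_box_diff_le[OF M V r ab] prob_space.abs_prob_in_box_diff_le[OF N V' r ab]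
        prob_sin_coords_in_box_eq[OF M N V V' eq, where c = "1 / real k"
          and a = "sin_coords (1 / real k) a" and b = "sin_coords (1 / real k) b"]
      by linarith
  qed
  moreover have "?tail \<longlonglongrightarrow> 0"
    using tendsto_add[OF prob_space.prob_outside_cube_tendsto_0[OF M V]
        prob_space.prob_outside_cube_tendsto_0[OF N V']] by simp
  ultimately have "\<bar>measure M {\<omega>\<in>space M. V \<omega> \<in> box a b} - measure N {\<omega>\<in>space N. V' \<omega> \<in> box a b}\<bar> \<le> 0"
    by (intro LIMSEQ_le_const) auto
  then show ?thesis by simp
qed

theorem cramer_wold:
  fixes V :: "'a \<Rightarrow> real^'p" and V' :: "'b \<Rightarrow> real^'p"
  assumes M: "prob_space M" and N: "prob_space N"
    and V: "V \<in> borel_measurable M" and V': "V' \<in> borel_measurable N"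
    and eq: "\<And>u. distr M borel (\<lambda>\<omega>. u \<bullet> V \<omega>) = distr N borel (\<lambda>\<omega>. u \<bullet> V' \<omega>)"
  shows "distr M borel V = distr N borel V'"
proof (rule measure_eqI_generator_eq)
  interpret M: prob_space M by fact
  interpret N: prob_space N by fact
  let ?E = "range (\<lambda>(a, b). box a b :: (real^'p) set)"
  show "Int_stable ?E"
    by (auto simp: Int_stable_def box_Int_box)
  show "?E \<subseteq> Pow UNIV" by auto
  show "sets (distr M borel V) = sigma_sets UNIV ?E" "sets (distr N borel V') = sigma_sets UNIV ?E"
    by (simp_all add: borel_eq_box)
  let ?A = "\<lambda>n::nat. box (- (real n *\<^sub>R One)) (real n *\<^sub>R One) :: (real^'p) set"
  show "range ?A \<subseteq> ?E" "(\<Union>i. ?A i) = UNIV"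
    unfolding UN_box_eq_UNIV by auto
  show "emeasure (distr M borel V) (?A i) \<noteq> \<infinity>" for i
    using V by (simp add: emeasure_distr)
  show "emeasure (distr M borel V) X = emeasure (distr N borel V') X" if "X \<in> ?E" for X
  proof -
    obtain a b where X: "X = box a b" using \<open>X \<in> ?E\<close> by auto
    have "emeasure (distr M borel V) X = measure M {\<omega>\<in>space M. V \<omega> \<in> box a b}"
      using V by (simp add: emeasure_distr X vimage_def Int_def conj_commute M.emeasure_eq_measure)
    also have "\<dots> = measure N {\<omega>\<in>space N. V' \<omega> \<in> box a b}"
      by (simp add: prob_in_box_eq[OF M N V V' eq])
    also have "\<dots> = emeasure (distr N borel V') X"
      using V' by (simp add: emeasure_distr X vimage_def Int_def conj_commute N.emeasure_eq_measure)
    finally show ?thesis .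
  qed
qed

section \<open>Gaussian vectors\<close>

lemma borel_measurable_vec_nthI:
  fixes f :: "'a \<Rightarrow> real^'n"
  assumes "\<And>i. (\<lambda>\<omega>. f \<omega> $ i) \<in> borel_measurable M"
  shows "f \<in> borel_measurable M"
proof (rule borel_measurable_euclidean_space[THEN iffD2], intro ballI)
  fix b :: "real^'n" assume "b \<in> Basis"
  then obtain i where "b = axis i 1" by (auto simp: Basis_vec_def)
  then show "(\<lambda>\<omega>. f \<omega> \<bullet> b) \<in> borel_measurable M"
    using assms by (simp add: inner_axis)
qed

lemma inner_iid_normal_gauss_law:
  fixes eps :: "'a \<Rightarrow> real^'n" and c :: "real^'n"
  assumes M: "prob_space M"
    and indep: "prob_space.indep_vars M (\<lambda>_. borel) (\<lambda>i \<omega>. eps \<omega> $ i) UNIV"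
    and normal: "\<forall>i. distributed M lborel (\<lambda>\<omega>. eps \<omega> $ i) (normal_density 0 sg)"
    and sg: "sg > 0"
  shows "distr M borel (\<lambda>\<omega>. c \<bullet> eps \<omega>) = gauss_law 0 (sg\<^sup>2 * (c \<bullet> c))"
proof -
  interpret prob_space M by fact
  define I where "I = {i. c $ i \<noteq> 0}"
  have sum_I: "(\<Sum>i\<in>UNIV. f i) = (\<Sum>i\<in>I. f i)" if "\<And>i. c $ i = 0 \<Longrightarrow> f i = 0" for f :: "'n \<Rightarrow> real"
    by (rule sum.mono_neutral_right) (auto simp: I_def that)
  have inner_eps: "c \<bullet> eps \<omega> = (\<Sum>i\<in>I. c $ i * eps \<omega> $ i)" for \<omega>
    unfolding inner_vec_def by (simp add: sum_I)
  have inner_c: "c \<bullet> c = (\<Sum>i\<in>I. (c $ i)\<^sup>2)"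
    unfolding inner_vec_def by (simp add: sum_I power2_eq_square)
  show ?thesis
  proof (cases "I = {}")
    case True
    then show ?thesis using inner_c inner_eps by (simp add: gauss_law_def)
  next
    case False
    have "indep_vars (\<lambda>_. borel) (\<lambda>i \<omega>. c $ i * eps \<omega> $ i) I"
      using indep_vars_compose2[OF indep_vars_subset[OF indep, of I], of "\<lambda>i x. c $ i * x" "\<lambda>_. borel"]
      by auto
    moreover have "distributed M lborel (\<lambda>\<omega>. c $ i * eps \<omega> $ i) (normal_density 0 (\<bar>c $ i\<bar> * sg))"
      if "i \<in> I" for i
      using normal_density_affine[OF normal[rule_format, of i] sg, of "c $ i" 0] that by (simp add: I_def)
    ultimately have "distributed M lborel (\<lambda>\<omega>. \<Sum>i\<in>I. c $ i * eps \<omega> $ i)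
        (normal_density (\<Sum>i\<in>I. 0) (sqrt (\<Sum>i\<in>I. (\<bar>c $ i\<bar> * sg)\<^sup>2)))"
      using sg False by (intro sum_indep_normal) (auto simp: I_def)
    moreover have "(\<Sum>i\<in>I. (\<bar>c $ i\<bar> * sg)\<^sup>2) = sg\<^sup>2 * (c \<bullet> c)"
      by (simp add: inner_c power_mult_distrib sum_distrib_left mult.commute)
    ultimately have "distributed M lborel (\<lambda>\<omega>. c \<bullet> eps \<omega>) (normal_density 0 (sqrt (sg\<^sup>2 * (c \<bullet> c))))"
      by (simp add: inner_eps)
    moreover have "c \<noteq> 0" using False by (auto simp: I_def)
    moreover have "distr M lborel f = distr M borel f" for f :: "'a \<Rightarrow> real"
      by (simp add: distr_def)
    ultimately show ?thesis
      using sg unfolding distributed_def gauss_law_def by simp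
  qed
qed

lemma centered_gaussian_vec_matrix_image:
  fixes eps :: "'a \<Rightarrow> real^'n" and B :: "real^'n^'p"
  assumes "prob_space M"
    and "prob_space.indep_vars M (\<lambda>_. borel) (\<lambda>i \<omega>. eps \<omega> $ i) UNIV"
    and normal: "\<forall>i. distributed M lborel (\<lambda>\<omega>. eps \<omega> $ i) (normal_density 0 sg)"
    and "sg > 0"
  shows "centered_gaussian_vec M (\<lambda>\<omega>. B *v eps \<omega>) (sg\<^sup>2 *\<^sub>R (B ** transpose B))"
  unfolding centered_gaussian_vec_def
proof
  have "eps \<in> borel_measurable M"
    using normal by (intro borel_measurable_vec_nthI) (simp add: distributed_def)
  then show "(\<lambda>\<omega>. B *v eps \<omega>) \<in> borel_measurable M"
    using borel_measurable_continuous_onI[OF matrix_vector_mult_linear_continuous_on[of UNIV B]]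
    by (rule measurable_compose)
  show "\<forall>u. distr M borel (\<lambda>\<omega>. u \<bullet> (B *v eps \<omega>)) = gauss_law 0 (u \<bullet> (sg\<^sup>2 *\<^sub>R (B ** transpose B) *v u))"
  proof
    fix u :: "real^'p"
    have "u \<bullet> (B *v eps \<omega>) = (transpose B *v u) \<bullet> eps \<omega>" for \<omega>
      by (simp add: dot_lmul_matrix)
    moreover have "(transpose B *v u) \<bullet> (transpose B *v u) = u \<bullet> ((B ** transpose B) *v u)"
    proof -
      have "(transpose B *v u) \<bullet> (transpose B *v u) = (u v* B) \<bullet> (transpose B *v u)"
        by simp
      also have "\<dots> = u \<bullet> (B *v (transpose B *v u))"
        by (rule dot_lmul_matrix)
      finally show ?thesis by (simp only: matrix_vector_mul_assoc)
    qed
    ultimately show "distr M borel (\<lambda>\<omega>. u \<bullet> (B *v eps \<omega>)) = gauss_law 0 (u \<bullet> (sg\<^sup>2 *\<^sub>R (B ** transpose B) *v u))"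
      using inner_iid_normal_gauss_law[OF assms, of "transpose B *v u"]
      by (simp add: scaleR_matrix_vector_assoc[symmetric])
  qed
qed

lemma centered_gaussian_vec_distr_eq:
  assumes "prob_space M" "prob_space N"
    and "centered_gaussian_vec M V C" "centered_gaussian_vec N W C"
  shows "distr M borel V = distr N borel W"
  using assms unfolding centered_gaussian_vec_def by (intro cramer_wold) auto

lemma integral_affine_normal_noise:
  fixes eps :: "'a \<Rightarrow> real^'n" and B :: "real^'n^'p"
  assumes M: "prob_space M"
    and normal: "\<forall>i. distributed M lborel (\<lambda>\<omega>. eps \<omega> $ i) (normal_density 0 sg)"
    and sg: "sg > 0"
  shows "(\<integral>\<omega>. (m + B *v eps \<omega>) $ j \<partial>M) = m $ j"
proof -
  interpret prob_space M by fact
  have "integrable lborel (\<lambda>x. normal_density 0 sg x * x)"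
    using sg by (rule integrable_normal_moment_nz_1)
  then have int: "integrable M (\<lambda>\<omega>. eps \<omega> $ i)" for i
    using distributed_integrable[OF normal[rule_format, of i], of "\<lambda>x. x"] by simp
  have mean: "(\<integral>\<omega>. eps \<omega> $ i \<partial>M) = 0" for i
    using normal_distributed_expectation[OF sg normal[rule_format, of i]] by simp
  have "(\<integral>\<omega>. (m + B *v eps \<omega>) $ j \<partial>M) = (\<integral>\<omega>. m $ j + (\<Sum>i\<in>UNIV. B $ j $ i * eps \<omega> $ i) \<partial>M)"
    by (simp add: matrix_vector_mult_def)
  also have "\<dots> = m $ j + (\<Sum>i\<in>UNIV. B $ j $ i * (\<integral>\<omega>. eps \<omega> $ i \<partial>M))"
    using int by (simp add: Bochner_Integration.integral_add Bochner_Integration.integral_sum prob_space)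
  finally show ?thesis by (simp add: mean)
qed

section \<open>The ridge estimator\<close>

lemma invertible_matrix_inv:
  assumes "invertible A"
  shows "A ** matrix_inv A = mat 1" "matrix_inv A ** A = mat 1"
  using someI_ex[OF assms[unfolded invertible_def]] unfolding matrix_inv_def by auto

lemma transpose_matrix_inv_symmetric:
  fixes A :: "real^'n^'n"
  assumes sym: "transpose A = A" and inv: "invertible A"
  shows "transpose (matrix_inv A) = matrix_inv A"
proof -
  have "transpose (matrix_inv A) ** A = mat 1"
    using arg_cong[OF invertible_matrix_inv(1)[OF inv], of transpose]
    by (simp add: matrix_transpose_mul sym)
  then have "transpose (matrix_inv A) = transpose (matrix_inv A) ** (A ** matrix_inv A)"
    by (simp add: invertible_matrix_inv(1)[OF inv])
  also have "\<dots> = (transpose (matrix_inv A) ** A) ** matrix_inv A"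
    by (simp add: matrix_mul_assoc)
  also have "\<dots> = matrix_inv A"
    using \<open>transpose (matrix_inv A) ** A = mat 1\<close> by simp
  finally show ?thesis .
qed

lemma transpose_add: "transpose (A + B) = transpose A + transpose B"
  by (simp add: transpose_def vec_eq_iff)

lemma inner_vector_matrix: "x \<bullet> (y v* A) = y \<bullet> (A *v x)"
  for A :: "real^'n^'m"
  by (metis dot_lmul_matrix inner_commute)

lemma transpose_Sigma_hat: "transpose (Sigma_hat X) = Sigma_hat X"
  unfolding Sigma_hat_def by (simp add: transpose_scalar matrix_transpose_mul)

lemma invertible_Sigma_hat_plus:
  fixes X :: "real^'p^'n"
  assumes "lam > 0"
  shows "invertible (Sigma_hat X + lam *\<^sub>R mat 1)"
  unfolding invertible_left_inverse matrix_left_invertible_ker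
proof (intro allI impI)
  fix x :: "real^'p"
  have "x \<bullet> ((Sigma_hat X + lam *\<^sub>R mat 1) *v x)
      = (1 / real CARD('n)) * ((X *v x) \<bullet> (X *v x)) + lam * (x \<bullet> x)"
    unfolding Sigma_hat_def
    by (simp add: matrix_vector_mult_add_rdistrib scaleR_matrix_vector_assoc[symmetric]
        matrix_vector_mul_assoc[symmetric] inner_add_right inner_vector_matrix)
  moreover assume "(Sigma_hat X + lam *\<^sub>R mat 1) *v x = 0"
  ultimately have "(1 / real CARD('n)) * ((X *v x) \<bullet> (X *v x)) + lam * (x \<bullet> x) = 0"
    by simp
  moreover have "0 \<le> (1 / real CARD('n)) * ((X *v x) \<bullet> (X *v x))"
    by simp
  ultimately have "lam * (x \<bullet> x) \<le> 0"
    by linarith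
  with \<open>lam > 0\<close> have "x \<bullet> x \<le> 0"
    by (simp add: mult_le_0_iff)
  then show "x = 0"
    by (metis inner_eq_zero_iff inner_ge_zero order_antisym)
qed

definition ridge_matrix :: "real^'p^'n \<Rightarrow> real \<Rightarrow> real^'n^'p" where
  "ridge_matrix X lam = (1 / real CARD('n)) *\<^sub>R (matrix_inv (Sigma_hat X + lam *\<^sub>R mat 1) ** transpose X)"

lemma ridge_eq_ridge_matrix: "ridge X lam Y = ridge_matrix X lam *v Y"
  unfolding ridge_def ridge_matrix_def
  by (simp add: scaleR_matrix_vector_assoc[symmetric] matrix_vector_mult_scaleR
      matrix_vector_mul_assoc[symmetric] del: transpose_matrix_vector)

lemma ridge_matrix_covariance:
  fixes X :: "real^'p^'n"
  assumes "lam > 0"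
  shows "ridge_matrix X lam ** transpose (ridge_matrix X lam) = (1 / real CARD('n)) *\<^sub>R Omega X lam"
proof -
  let ?A = "matrix_inv (Sigma_hat X + lam *\<^sub>R mat 1)"
  have "transpose ?A = ?A"
    using assms by (intro transpose_matrix_inv_symmetric invertible_Sigma_hat_plus)
      (simp add: transpose_Sigma_hat transpose_scalar transpose_add transpose_mat)
  then show ?thesis
    unfolding ridge_matrix_def Omega_def Sigma_hat_def
    by (simp add: transpose_scalar matrix_transpose_mul scalar_matrix_assoc[symmetric]
        matrix_scalar_ac matrix_mul_assoc)
qed

section \<open>The standard normal distribution function\<close>

lemma prob_space_std_normal: "prob_space (density lborel std_normal_density)"
  by (rule prob_space_normal_density) simp

lemma Phi_nonneg: "0 \<le> Phi x"
  unfolding Phi_def by simp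

lemma Phi_mono: "x \<le> y \<Longrightarrow> Phi x \<le> Phi y"
proof -
  interpret prob_space "density lborel std_normal_density" by (rule prob_space_std_normal)
  show "x \<le> y \<Longrightarrow> Phi x \<le> Phi y"
    unfolding Phi_def by (intro finite_measure_mono) auto
qed

lemma borel_measurable_Phi: "Phi \<in> borel_measurable borel"
  by (rule borel_measurable_mono) (simp add: mono_def Phi_mono)

lemma Phi_add_le:
  assumes "0 \<le> d"
  shows "Phi (x + d) \<le> Phi x + d / sqrt (2 * pi)"
proof -
  interpret prob_space "density lborel std_normal_density" by (rule prob_space_std_normal)
  have "{..x + d} = {..x} \<union> {x<..x + d}" using assms by auto
  then have "Phi (x + d) = Phi x + prob {x<..x + d}"
    unfolding Phi_def by (simp, subst finite_measure_Union) auto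
  moreover have "emeasure (density lborel std_normal_density) {x<..x + d} \<le> d / sqrt (2 * pi)"
  proof -
    have "emeasure (density lborel std_normal_density) {x<..x + d}
        = (\<integral>\<^sup>+ y. ennreal (std_normal_density y) * indicator {x<..x + d} y \<partial>lborel)"
      by (rule emeasure_density) auto
    also have "\<dots> \<le> (\<integral>\<^sup>+ y. ennreal (1 / sqrt (2 * pi)) * indicator {x<..x + d} y \<partial>lborel)"
      by (intro nn_integral_mono mult_right_mono)
        (auto simp: std_normal_density_def divide_right_mono)
    also have "\<dots> = ennreal (d / sqrt (2 * pi))"
      using assms by (simp add: nn_integral_cmult_indicator ennreal_mult'[symmetric])
    finally show ?thesis .
  qed
  then have "prob {x<..x + d} \<le> d / sqrt (2 * pi)"
    using assms by (simp add: emeasure_eq_measure ennreal_le_iff)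
  ultimately show ?thesis by simp
qed

section \<open>P-values\<close>

definition min_pvalue :: "real^'p^'n \<Rightarrow> real \<Rightarrow> real \<Rightarrow> real^'p \<Rightarrow> real" where
  "min_pvalue X lam sg z = Min (range (\<lambda>j. 2 * (1 - Phi (a_np X lam sg j * \<bar>z $ j\<bar>))))"

lemma FZ_eq_min_pvalue: "FZ N Z X lam sg c = measure N {\<omega>\<in>space N. min_pvalue X lam sg (Z \<omega>) \<le> c}"
  unfolding FZ_def min_pvalue_def ..

lemma min_pvalue_le_iff:
  "min_pvalue X lam sg z \<le> t \<longleftrightarrow> (\<exists>j. 2 * (1 - Phi (a_np X lam sg j * \<bar>z $ j\<bar>)) \<le> t)"
  unfolding min_pvalue_def by (auto simp: Min_le_iff)

lemma min_pvalue_le_2: "min_pvalue X lam sg z \<le> 2"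
  unfolding min_pvalue_le_iff using Phi_nonneg by auto

lemma sets_min_pvalue_le:
  assumes "V \<in> borel_measurable M"
  shows "{\<omega>\<in>space M. min_pvalue X lam sg (V \<omega>) \<le> t} \<in> sets M"
  unfolding min_pvalue_le_iff using assms borel_measurable_Phi by measurable

lemma FZ_eq_measure_distr:
  assumes V: "V \<in> borel_measurable M" and Z: "Z \<in> borel_measurable N"
    and law: "distr M borel V = distr N borel Z"
  shows "FZ N Z X lam sg t = measure M {\<omega>\<in>space M. min_pvalue X lam sg (V \<omega>) \<le> t}"
proof -
  let ?S = "{z. min_pvalue X lam sg z \<le> t}"
  have S: "?S \<in> sets borel"
    using sets_min_pvalue_le[of "\<lambda>z. z" borel] by simp
  have "measure M {\<omega>\<in>space M. min_pvalue X lam sg (V \<omega>) \<le> t} = measure (distr M borel V) ?S"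
    using measure_distr[OF V S] by (simp add: vimage_def Int_def conj_commute)
  also have "\<dots> = measure (distr N borel Z) ?S"
    by (simp add: law)
  also have "\<dots> = FZ N Z X lam sg t"
    using measure_distr[OF Z S] by (simp add: FZ_eq_min_pvalue vimage_def Int_def conj_commute)
  finally show ?thesis ..
qed

lemma FZ_eq_prob_ridge_noise:
  fixes eps :: "'a \<Rightarrow> real^'n" and X :: "real^'p^'n" and Z :: "'b \<Rightarrow> real^'p"
  assumes M: "prob_space M" and N: "prob_space N"
    and indep: "prob_space.indep_vars M (\<lambda>_. borel) (\<lambda>i \<omega>. eps \<omega> $ i) UNIV"
    and normal: "\<forall>i. distributed M lborel (\<lambda>\<omega>. eps \<omega> $ i) (normal_density 0 sg)"
    and "sg > 0" "lam > 0"
    and Z: "centered_gaussian_vec N Z ((sg\<^sup>2 / real CARD('n)) *\<^sub>R Omega X lam)"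
  defines "W \<equiv> \<lambda>\<omega>. ridge_matrix X lam *v eps \<omega>"
  shows "W \<in> borel_measurable M"
    and "FZ N Z X lam sg t = measure M {\<omega>\<in>space M. min_pvalue X lam sg (W \<omega>) \<le> t}"
proof -
  have W: "centered_gaussian_vec M W ((sg\<^sup>2 / real CARD('n)) *\<^sub>R Omega X lam)"
    using centered_gaussian_vec_matrix_image[OF M indep normal \<open>sg > 0\<close>, of "ridge_matrix X lam"]
    by (simp add: W_def ridge_matrix_covariance[OF \<open>lam > 0\<close>])
  then show W_meas: "W \<in> borel_measurable M"
    by (simp add: centered_gaussian_vec_def)
  show "FZ N Z X lam sg t = measure M {\<omega>\<in>space M. min_pvalue X lam sg (W \<omega>) \<le> t}"
    using Z W_meas centered_gaussian_vec_distr_eq[OF M N W Z]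
    by (intro FZ_eq_measure_distr) (auto simp: centered_gaussian_vec_def)
qed

lemma le_FZinv:
  assumes "prob_space N" "alpha < 1" "FZ N Z X lam sg x \<le> alpha"
  shows "x \<le> FZinv (FZ N Z X lam sg) alpha"
proof -
  interpret prob_space N by fact
  have F_eq_1: "FZ N Z X lam sg c = 1" if "2 \<le> c" for c
  proof -
    have "{\<omega>\<in>space N. min_pvalue X lam sg (Z \<omega>) \<le> c} = space N"
      using order_trans[OF min_pvalue_le_2 that] by auto
    then show ?thesis by (simp add: FZ_eq_min_pvalue prob_space)
  qed
  have "c \<le> 2" if "FZ N Z X lam sg c \<le> alpha" for c
    using F_eq_1[of c] that \<open>alpha < 1\<close> by (cases "2 \<le> c") auto
  then have "bdd_above {c. FZ N Z X lam sg c \<le> alpha}"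
    by (intro bdd_aboveI[of _ 2]) auto
  then show ?thesis
    unfolding FZinv_def using assms(3) by (intro cSup_upper) auto
qed

lemma a_np_pos: "sg > 0 \<Longrightarrow> Omega X lam $ j $ j > 0 \<Longrightarrow> a_np X lam sg j > 0"
  by (simp add: a_np_def)

lemma debiased_error_decomposition:
  fixes P :: "real^'p^'p" and beta m w b :: "real^'p"
  assumes "beta $ j = 0"
  shows "(m + w) $ j - (\<Sum>k\<in>UNIV - {j}. P $ j $ k * b $ k)
       = w $ j + (m $ j - (P *v beta) $ j) - (\<Sum>k\<in>UNIV - {j}. P $ j $ k * (b $ k - beta $ k))"
  using assms
  by (simp add: matrix_vector_mult_def sum.remove[of UNIV j] right_diff_distrib sum_subtractf)

text \<open>In the application b is the bias of the ridge estimator and s the error of the initial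
  estimator in the correction term.\<close>

lemma pvalue_shift_le:
  fixes a z b s delta r :: real
  assumes "0 < a" "\<bar>a * s\<bar> \<le> delta" "a * \<bar>b\<bar> \<le> r"
  shows "2 * (1 - Phi (a * \<bar>z\<bar>)) \<le> 2 * (1 - Phi (max 0 (a * \<bar>z + b - s\<bar> - delta))) + 2 * (r / sqrt (2 * pi))"
proof -
  have "r \<ge> 0"
    using assms(1,3) by (smt (verit) mult_nonneg_nonneg abs_ge_zero)
  have "a * \<bar>z + b - s\<bar> \<le> a * (\<bar>z\<bar> + \<bar>b\<bar> + \<bar>s\<bar>)"
    using \<open>0 < a\<close> by (intro mult_left_mono) arith+
  also have "\<dots> = a * \<bar>z\<bar> + a * \<bar>b\<bar> + \<bar>a * s\<bar>"
    using \<open>0 < a\<close> by (simp add: abs_mult distrib_left)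
  finally have "max 0 (a * \<bar>z + b - s\<bar> - delta) \<le> a * \<bar>z\<bar> + r"
    using assms \<open>r \<ge> 0\<close> \<open>0 < a\<close> by (simp add: max_def)
  then have "Phi (max 0 (a * \<bar>z + b - s\<bar> - delta)) \<le> Phi (a * \<bar>z\<bar> + r)"
    by (rule Phi_mono)
  also have "\<dots> \<le> Phi (a * \<bar>z\<bar>) + r / sqrt (2 * pi)"
    using \<open>r \<ge> 0\<close> by (rule Phi_add_le)
  finally have "Phi (max 0 (a * \<bar>z + b - s\<bar> - delta)) \<le> Phi (a * \<bar>z\<bar>) + r / sqrt (2 * pi)" .
  then show ?thesis
    by (smt (verit))
qed

lemma prob_le_prob_plus_compl:
  assumes "prob_space M" "T \<in> sets M" "A \<subseteq> space M" "E \<subseteq> space M" "A \<inter> E \<subseteq> T"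
  shows "measure M A \<le> measure M T + (1 - measure M E)"
proof -
  interpret prob_space M by fact
  show ?thesis
  proof (cases "A \<in> events \<and> E \<in> events")
    case True
    then have "prob A \<le> prob (T \<union> (space M - E))"
      using assms by (intro finite_measure_mono) auto
    also have "\<dots> \<le> prob T + prob (space M - E)"
      using True assms by (intro measure_Un_le) auto
    finally show ?thesis
      using True by (simp add: prob_compl)
  next
    case False
    then consider "A \<notin> events" | "E \<notin> events" by blast
    then show ?thesis
    proof cases
      case 1
      then have "prob A = 0" by (rule measure_notin_sets)
      then show ?thesis using prob_le_1[of E] measure_nonneg[of M T] by linarith
    next
      case 2
      then have "prob E = 0" by (rule measure_notin_sets)
      then show ?thesis using prob_le_1[of A] measure_nonneg[of M T] by linarith
    qed
  qed
qed

theorem proposition4: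
  fixes M :: "'a measure" and N :: "'b measure"
    and X :: "real^'p^'n" and beta0 :: "real^'p" and eps :: "'a \<Rightarrow> real^'n"
    and sg lam zeta alpha :: real and Delta :: "'p \<Rightarrow> real"
    and g :: "real^'n \<Rightarrow> real^'p" and Z :: "'b \<Rightarrow> real^'p"
  assumes M: "prob_space M"
    and eps_indep: "prob_space.indep_vars M (\<lambda>_. borel) (\<lambda>i \<omega>. eps \<omega> $ i) UNIV"
    and eps_normal: "\<forall>i. distributed M lborel (\<lambda>\<omega>. eps \<omega> $ i) (normal_density 0 sg)"
    and sg: "sg > 0"
    and lam: "lam > 0"
    and Omega_min: "\<forall>j. Omega X lam $ j $ j > 0"
    and g: "g \<in> borel_measurable borel"
    and Delta: "\<forall>j. Delta j > 0"
    and zeta: "zeta \<ge> 0"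
    and N: "prob_space N"
    and Z: "centered_gaussian_vec N Z ((sg\<^sup>2 / real CARD('n)) *\<^sub>R Omega X lam)"
    and alpha: "0 < alpha" "alpha < 1"
  defines "Y \<equiv> \<lambda>\<omega>. X *v beta0 + eps \<omega>"
  defines "bhat \<equiv> \<lambda>\<omega>. ridge X lam (Y \<omega>)"
  defines "binit \<equiv> \<lambda>\<omega>. g (Y \<omega>)"
  defines "PX \<equiv> proj_X X"
  defines "theta0 \<equiv> PX *v beta0"
  defines "a \<equiv> a_np X lam sg"
  defines "bias \<equiv> \<lambda>j. (\<integral>\<omega>. bhat \<omega> $ j \<partial>M) - theta0 $ j"
  defines "abinf \<equiv> Max (range (\<lambda>j. a j * \<bar>bias j\<bar>))"
  defines "bcorr \<equiv> \<lambda>\<omega> j. bhat \<omega> $ j - (\<Sum>k\<in>UNIV - {j}. PX $ j $ k * binit \<omega> $ k)"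
  defines "Pj \<equiv> \<lambda>\<omega> j. 2 * (1 - Phi (max 0 (a j * \<bar>bcorr \<omega> j\<bar> - Delta j)))"
  defines "F \<equiv> FZ N Z X lam sg"
  defines "Pcorr \<equiv> \<lambda>\<omega> j. F (Pj \<omega> j + zeta)"
  defines "E \<equiv> {\<omega> \<in> space M. \<forall>j. \<bar>a j * (\<Sum>k\<in>UNIV - {j}. PX $ j $ k * (binit \<omega> $ k - beta0 $ k))\<bar> \<le> Delta j}"
  defines "V \<equiv> \<lambda>\<omega>. {j. Pcorr \<omega> j \<le> alpha} \<inter> {j. beta0 $ j = 0}"
  shows "measure M {\<omega> \<in> space M. card (V \<omega>) > 0}
           \<le> F (FZinv F alpha - zeta + 2 * (2 * pi) powr (-1/2) * abinf) + (1 - measure M E)"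
proof -
  define W where "W = (\<lambda>\<omega>. ridge_matrix X lam *v eps \<omega>)"
  define m where "m = ridge X lam (X *v beta0)"
  define t where "t = FZinv F alpha - zeta + 2 * (2 * pi) powr (-1/2) * abinf"
  note W_meas = FZ_eq_prob_ridge_noise(1)[OF M N eps_indep eps_normal sg lam Z, folded W_def]
  have F_eq: "F t = measure M {\<omega>\<in>space M. min_pvalue X lam sg (W \<omega>) \<le> t}"
    unfolding F_def W_def by (rule FZ_eq_prob_ridge_noise(2)[OF M N eps_indep eps_normal sg lam Z])
  have bhat_eq: "bhat \<omega> = m + W \<omega>" for \<omega>
    by (simp add: bhat_def Y_def m_def W_def ridge_eq_ridge_matrix matrix_vector_right_distrib)
  have bias_eq: "bias j = m $ j - theta0 $ j" for j
    using integral_affine_normal_noise[OF M eps_normal sg] by (simp add: bias_def bhat_eq W_def)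
  have "min_pvalue X lam sg (W \<omega>) \<le> t" if "\<omega> \<in> E" "j \<in> V \<omega>" for \<omega> j
  proof -
    from \<open>j \<in> V \<omega>\<close> have "beta0 $ j = 0" "F (Pj \<omega> j + zeta) \<le> alpha"
      by (auto simp: V_def Pcorr_def)
    then have "Pj \<omega> j + zeta \<le> FZinv F alpha"
      unfolding F_def by (intro le_FZinv[OF N alpha(2)])
    moreover have "2 * (1 - Phi (a j * \<bar>W \<omega> $ j\<bar>)) \<le> Pj \<omega> j + 2 * (abinf / sqrt (2 * pi))"
      unfolding Pj_def bcorr_def bhat_eq debiased_error_decomposition[OF \<open>beta0 $ j = 0\<close>]
      using \<open>\<omega> \<in> E\<close> a_np_pos[OF sg Omega_min[rule_format]]
      by (intro pvalue_shift_le) (auto simp: E_def a_def bias_eq theta0_def abinf_def)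
    ultimately show ?thesis
      unfolding min_pvalue_le_iff t_def a_def
      by (intro exI[of _ j]) (simp add: powr_minus_divide powr_half_sqrt)
  qed
  then have "{\<omega>\<in>space M. card (V \<omega>) > 0} \<inter> E \<subseteq> {\<omega>\<in>space M. min_pvalue X lam sg (W \<omega>) \<le> t}"
    by (auto simp: card_gt_0_iff)
  then show ?thesis
    unfolding F_eq t_def[symmetric]
    by (intro prob_le_prob_plus_compl[OF M] sets_min_pvalue_le[OF W_meas]) (auto simp: E_def)
qed

end
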